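(* Let $p$ be a prime. There exists a subset $A\subseteq\mathbb{F}_p$ with $A-A\doteq\mathcal{R}_p$ if and only if $p=2n(n-1)+1$ for some integer $n$ and there exists $\alpha\in\mathcal{O}$ such that $|\alpha|^2=n+\rho$ and $\operatorname{tr}(\alpha\zeta^{-k})\in\{-n,p-n\}$ for every integer $k$.
   Context: $\mathcal{R}_p$ is the set of nonzero quadratic residues modulo $p$. $A-A\doteq S$ means: every element of $S$ has exactly one representation as $a'-a''$ with $a',a''\in A$, and every difference $a'-a''$ with $a'\ne a''$ in $A$ lies in $S$. $\zeta\in\mathbb{C}$ is a primitive $p$-th root of unity, $K=\mathbb{Q}(\zeta)$, $\mathcal{O}=\mathbb{Z}[\zeta]$ its ring of integers, $\operatorname{tr}$ the trace from $K$ to $\mathbb{Q}$, $|\cdot|$ the complex absolute value, and $\rho:=\sum_{x\in\mathcal{R}_p}\zeta^x$ (the quadratic Gaussian period, equal to $(\sqrt p-1)/2$ for $\zeta=e^{2\pi i/p}$ when $p\equiv1\pmod 4$). *)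

theory Defs
  imports Complex_Main "HOL-Number_Theory.Number_Theory" "HOL-Computational_Algebra.Polynomial"
begin

definition Fp :: "nat \<Rightarrow> int set" where
  "Fp p = {0..<int p}"

definition quad_res_set :: "nat \<Rightarrow> int set" where
  "quad_res_set p = {x \<in> {1..<int p}. QuadRes (int p) x}"

definition diff_exact :: "nat \<Rightarrow> int set \<Rightarrow> int set \<Rightarrow> bool" where
  "diff_exact p A S \<longleftrightarrow>
     (\<forall>s\<in>S. \<exists>!(a1, a2). a1 \<in> A \<and> a2 \<in> A \<and> (a1 - a2) mod int p = s) \<and>
     (\<forall>a1\<in>A. \<forall>a2\<in>A. a1 \<noteq> a2 \<longrightarrow> (a1 - a2) mod int p \<in> S)"

text \<open>Ring of integers Z[zeta] of Q(zeta), as a subset of the complex numbers.\<close>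
definition cyc_int :: "nat \<Rightarrow> complex \<Rightarrow> complex set" where
  "cyc_int p \<zeta> = {\<beta>. \<exists>c :: nat \<Rightarrow> int. \<beta> = (\<Sum>j<p. of_int (c j) * \<zeta> ^ j)}"

text \<open>Trace from Q(zeta) to Q: sum of the conjugates sigma_j(beta), j = 1..p-1,
  where sigma_j sends zeta to zeta^j; beta is written as a rational polynomial in zeta.\<close>
definition cyc_trace :: "nat \<Rightarrow> complex \<Rightarrow> complex \<Rightarrow> complex" where
  "cyc_trace p \<zeta> \<beta> = (THE t. \<exists>q :: rat poly. poly (map_poly of_rat q) \<zeta> = \<beta> \<and>
       t = (\<Sum>j\<in>{1..<p}. poly (map_poly of_rat q) (\<zeta> ^ j)))"

definition gauss_period :: "nat \<Rightarrow> complex \<Rightarrow> complex" where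
  "gauss_period p \<zeta> = (\<Sum>x\<in>quad_res_set p. \<zeta> powi x)"

end

theory Submission
  imports Defs "HOL-Computational_Algebra.Polynomial_Factorial" "HOL-Computational_Algebra.Field_as_Ring"
begin

text \<open>
  Write \<open>\<Phi>\<^sub>p = 1 + x + \<dots> + x\<^sup>p\<^sup>-\<^sup>1\<close>; it is irreducible over \<open>\<rat>\<close> (Eisenstein at \<open>p\<close> after
  \<open>x \<mapsto> x + 1\<close>, then Gauss's lemma), so it divides every rational polynomial vanishing at \<open>\<zeta>\<close>.
  Consequently \<open>\<Sum>\<^sub>j c\<^sub>j \<zeta>\<^sup>j = 0\<close> with \<open>j < p\<close> forces all \<open>c\<^sub>j\<close> to be equal, and
  \<open>tr(\<alpha> \<zeta>\<^sup>-\<^sup>k) = p c\<^sub>k - \<Sum>\<^sub>j c\<^sub>j\<close> for \<open>\<alpha> = \<Sum>\<^sub>j c\<^sub>j \<zeta>\<^sup>j\<close>.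

  The trace condition therefore says that all \<open>c\<^sub>k\<close> lie in \<open>{m, m + 1}\<close>; since
  \<open>\<Sum>\<^sub>j \<zeta>\<^sup>j = 0\<close>, \<open>\<alpha> = \<Sum>\<^sub>a\<^sub>\<in>\<^sub>A \<zeta>\<^sup>a\<close> for the set \<open>A\<close> of those \<open>k\<close> with \<open>c\<^sub>k = m + 1\<close>,
  and the values \<open>-n, p - n\<close> give \<open>|A| = n\<close>. For such a subset sum,
  \<open>|\<alpha>|\<^sup>2 = \<Sum>\<^sub>i N(i) \<zeta>\<^sup>i\<close>, where \<open>N(i)\<close> counts the representations \<open>i \<equiv> a - a'\<close> with
  \<open>a, a' \<in> A\<close>; comparing coefficients with \<open>n + \<rho> = n + \<Sum>\<^sub>x\<^sub>\<in>\<^sub>R \<zeta>\<^sup>x\<close> shows that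
  \<open>|\<alpha>|\<^sup>2 = n + \<rho>\<close> is exactly \<open>A - A \<doteq> R\<close>. Counting pairs then gives
  \<open>n\<^sup>2 = n + (p - 1)/2\<close>, i.e. \<open>p = 2n(n - 1) + 1\<close>.
\<close>

section \<open>The cyclotomic polynomial of prime index\<close>

text \<open>For prime \<open>n\<close> this is the \<open>n\<close>-th cyclotomic polynomial.\<close>

definition geom_poly :: "nat \<Rightarrow> 'a::comm_ring_1 poly" where
  "geom_poly n = (\<Sum>i<n. monom 1 i)"

lemma coeff_geom_poly: "coeff (geom_poly n) i = (if i < n then 1 else 0)"
  by (simp add: geom_poly_def coeff_sum coeff_monom)

lemma poly_geom_poly: "poly (geom_poly n) x = (\<Sum>i<n. x ^ i)"
  by (simp add: geom_poly_def poly_sum poly_monom)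

lemma degree_geom_poly: "n > 0 \<Longrightarrow> degree (geom_poly n :: 'a::comm_ring_1 poly) = n - 1"
  by (intro antisym degree_le le_degree) (auto simp: coeff_geom_poly)

lemma geom_poly_nonzero: "n > 0 \<Longrightarrow> geom_poly n \<noteq> 0"
  by (metis coeff_0 coeff_geom_poly zero_neq_one)

lemma map_poly_of_rat_geom_poly:
  "map_poly (of_rat :: rat \<Rightarrow> 'a::field_char_0) (geom_poly n) = geom_poly n"
  by (rule poly_eqI) (simp add: coeff_map_poly coeff_geom_poly)

lemma map_poly_of_int_geom_poly:
  "map_poly (of_int :: int \<Rightarrow> 'a::comm_ring_1) (geom_poly n) = geom_poly n"
  by (rule poly_eqI) (simp add: coeff_map_poly coeff_geom_poly)

lemma content_geom_poly: "n > 0 \<Longrightarrow> content (geom_poly n :: int poly) = 1"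
  using content_dvd_coeff[of "geom_poly n" 0] normalize_content[of "geom_poly n :: int poly"]
  by (simp add: coeff_geom_poly)

lemma coeff_geom_poly_shift:
  "coeff (pcompose (geom_poly n) [:1, 1:] :: int poly) k = (if k < n then int (n choose Suc k) else 0)"
proof -
  define Q :: "int poly" where "Q = (\<Sum>k<n. monom (int (n choose Suc k)) k)"
  have "[:0, 1:] * pcompose (geom_poly n) [:1, 1:] = [:0, 1:] * Q"
  proof (rule poly_ext)
    fix y :: int
    have "(1 + y) ^ n = (\<Sum>k\<le>n. of_nat (n choose k) * y ^ k)"
      using binomial_ring[of y 1 n] by (simp add: add.commute)
    also have "\<dots> = 1 + (\<Sum>k<n. of_nat (n choose Suc k) * y ^ Suc k)"
      by (cases n) (simp_all only: sum.atMost_shift, simp_all)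
    also have "\<dots> = 1 + y * poly Q y"
      by (simp add: Q_def poly_sum poly_monom sum_distrib_left algebra_simps)
    finally have "y * poly Q y = (1 + y) ^ n - 1" by simp
    also have "\<dots> = y * (\<Sum>i<n. (1 + y) ^ i)"
      using power_diff_1_eq[of "1 + y" n] by simp
    finally have "y * poly Q y = y * (\<Sum>i<n. (1 + y) ^ i)" .
    then show "poly ([:0, 1:] * pcompose (geom_poly n) [:1, 1:]) y = poly ([:0, 1:] * Q) y"
      by (simp add: poly_pcompose poly_geom_poly) metis
  qed
  then show ?thesis by (simp add: Q_def coeff_sum coeff_monom)
qed

lemma eisenstein_right_factor_const:
  fixes F G H :: "'a::idom poly"
  assumes q: "prime_elem q" and H: "F * G = H"
    and F0: "q dvd coeff F 0" and G0: "\<not> q dvd coeff G 0"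
    and low: "\<And>k. k < degree H \<Longrightarrow> q dvd coeff H k"
    and lead: "\<not> q dvd lead_coeff H"
  shows "degree G = 0"
proof (rule ccontr)
  assume dG: "degree G \<noteq> 0"
  have "F \<noteq> 0" "G \<noteq> 0" using lead H by auto
  then have dH: "degree H = degree F + degree G" using H by (metis degree_mult_eq)
  have dvd_low: "\<forall>j\<le>i. q dvd coeff F j" if "i \<le> degree F" for i
    using that
  proof (induction i)
    case 0
    then show ?case using F0 by simp
  next
    case (Suc i)
    then have IH: "\<forall>j\<le>i. q dvd coeff F j" by simp
    have "coeff H (Suc i) = (\<Sum>j\<le>i. coeff F j * coeff G (Suc i - j)) + coeff F (Suc i) * coeff G 0"
      unfolding H[symmetric] by (simp add: coeff_mult)
    moreover have "q dvd coeff H (Suc i)" using low Suc.prems dH dG by simp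
    moreover have "q dvd (\<Sum>j\<le>i. coeff F j * coeff G (Suc i - j))"
      using IH by (intro dvd_sum) auto
    ultimately have "q dvd coeff F (Suc i) * coeff G 0" by (simp add: dvd_add_right_iff)
    with q G0 have "q dvd coeff F (Suc i)" by (simp add: prime_elem_dvd_mult_iff)
    with IH show ?case using le_Suc_eq by auto
  qed
  then have "q dvd lead_coeff F" using dvd_low[of "degree F"] by simp
  then have "q dvd lead_coeff H" unfolding H[symmetric] by (simp add: lead_coeff_mult)
  with lead show False ..
qed

lemma eisenstein_criterion:
  fixes F G H :: "'a::idom poly"
  assumes q: "prime_elem q" and H: "F * G = H" and "degree H > 0"
    and low: "\<And>k. k < degree H \<Longrightarrow> q dvd coeff H k"
    and lead: "\<not> q dvd lead_coeff H"
    and const: "\<not> q\<^sup>2 dvd coeff H 0"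
  shows "degree F = 0 \<or> degree G = 0"
proof -
  have H0: "coeff H 0 = coeff F 0 * coeff G 0" unfolding H[symmetric] by (rule coeff_mult_0)
  moreover have "q dvd coeff H 0" using low \<open>degree H > 0\<close> by simp
  ultimately have "q dvd coeff F 0 \<or> q dvd coeff G 0" using q by (simp add: prime_elem_dvd_mult_iff)
  moreover have not_both: "\<not> (q dvd coeff F 0 \<and> q dvd coeff G 0)"
  proof
    assume "q dvd coeff F 0 \<and> q dvd coeff G 0"
    then have "q * q dvd coeff H 0" unfolding H0 by (blast intro: mult_dvd_mono)
    with const show False by (simp add: power2_eq_square)
  qed
  ultimately show ?thesis
  proof (elim disjE)
    assume "q dvd coeff F 0"
    with not_both have "degree G = 0" by (intro eisenstein_right_factor_const[OF q H _ _ low lead]) auto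
    then show ?thesis ..
  next
    assume "q dvd coeff G 0"
    moreover have "G * F = H" using H by (simp add: mult.commute)
    ultimately have "degree F = 0" using not_both by (intro eisenstein_right_factor_const[OF q _ _ _ low lead]) auto
    then show ?thesis ..
  qed
qed

lemma geom_poly_prime_factor_const_int:
  fixes F G :: "int poly"
  assumes p: "prime p" and FG: "F * G = geom_poly p"
  shows "degree F = 0 \<or> degree G = 0"
proof -
  have p2: "p \<ge> 2" using p prime_ge_2_nat by blast
  define H :: "int poly" where "H = pcompose (geom_poly p) [:1, 1:]"
  have dH: "degree H = p - 1" using p2 by (simp add: H_def degree_pcompose degree_geom_poly)
  have "degree (pcompose F [:1, 1:]) = 0 \<or> degree (pcompose G [:1, 1:]) = 0"
  proof (rule eisenstein_criterion)
    show "prime_elem (int p)" using p by simp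
    show "pcompose F [:1, 1:] * pcompose G [:1, 1:] = H"
      unfolding H_def FG[symmetric] by (rule pcompose_mult[symmetric])
    show "degree H > 0" using dH p2 by simp
    show "int p dvd coeff H k" if "k < degree H" for k
    proof -
      have k: "Suc k < p" using that dH by simp
      then have "p dvd p choose Suc k" using p by (intro dvd_choose_prime) auto
      with k show ?thesis by (simp add: H_def coeff_geom_poly_shift)
    qed
    show "\<not> int p dvd lead_coeff H" using p2 dH by (simp add: H_def coeff_geom_poly_shift)
    have "\<not> int p ^ 2 dvd int p"
    proof
      assume "int p ^ 2 dvd int p"
      then have "int p * int p \<le> int p * 1" using p2 by (intro zdvd_imp_le) (auto simp: power2_eq_square)
      with p2 show False by simp
    qed
    moreover have "coeff H 0 = int p" unfolding H_def coeff_geom_poly_shift using p2 by simp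
    ultimately show "\<not> int p ^ 2 dvd coeff H 0" by simp
  qed
  then show ?thesis by (simp add: degree_pcompose)
qed

lemma map_poly_of_rat_add:
  "map_poly (of_rat :: rat \<Rightarrow> 'a::field_char_0) (P + Q) = map_poly of_rat P + map_poly of_rat Q"
  by (rule poly_eqI) (simp add: coeff_map_poly of_rat_add)

lemma map_poly_of_rat_diff:
  "map_poly (of_rat :: rat \<Rightarrow> 'a::field_char_0) (P - Q) = map_poly of_rat P - map_poly of_rat Q"
  by (rule poly_eqI) (simp add: coeff_map_poly of_rat_diff)

lemma map_poly_of_rat_mult:
  "map_poly (of_rat :: rat \<Rightarrow> 'a::field_char_0) (P * Q) = map_poly of_rat P * map_poly of_rat Q"
  by (rule poly_eqI) (simp add: coeff_map_poly coeff_mult of_rat_sum of_rat_mult)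

lemma map_poly_of_int_mult:
  "map_poly (of_int :: int \<Rightarrow> 'a::comm_ring_1) (P * Q) = map_poly of_int P * map_poly of_int Q"
  by (rule poly_eqI) (simp add: coeff_map_poly coeff_mult of_int_sum)

lemma map_poly_of_int_inject:
  "map_poly (of_int :: int \<Rightarrow> 'a::ring_char_0) P = map_poly of_int Q \<longleftrightarrow> P = Q"
  by (metis coeff_map_poly of_int_0 of_int_eq_iff poly_eqI)

lemma rat_poly_int_multiple: "\<exists>d F. d \<noteq> 0 \<and> map_poly of_int F = smult (of_int d) (f :: rat poly)"
proof (induction f rule: pCons_induct)
  case 0
  show ?case by (intro exI[of _ 1] exI[of _ 0]) simp
next
  case (pCons a f)
  obtain d F where d: "d \<noteq> 0" and F: "map_poly of_int F = smult (of_int d) f"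
    using pCons.IH by blast
  obtain u v where "quotient_of a = (u, v)" by force
  then have v: "v > 0" and a: "a = of_int u / of_int v"
    by (simp_all add: quotient_of_denom_pos quotient_of_div)
  have "map_poly of_int (pCons (d * u) (smult v F)) = smult (of_int (d * v)) (pCons a f)"
    using v by (simp add: map_poly_pCons map_poly_smult F a mult.commute)
  with d v show ?case by (intro exI[of _ "d * v"] exI[of _ "pCons (d * u) (smult v F)"]) simp
qed

lemma geom_poly_prime_factor_const_rat:
  fixes f g :: "rat poly"
  assumes p: "prime p" and fg: "f * g = geom_poly p"
  shows "degree f = 0 \<or> degree g = 0"
proof -
  have p0: "p > 0" using p prime_gt_0_nat by blast
  obtain d F where d: "d \<noteq> 0" and F: "map_poly of_int F = smult (of_int d) f"
    using rat_poly_int_multiple by blast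
  obtain e G where e: "e \<noteq> 0" and G: "map_poly of_int G = smult (of_int e) g"
    using rat_poly_int_multiple by blast
  have "map_poly of_int (F * G) = (map_poly of_int (smult (d * e) (geom_poly p)) :: rat poly)"
    by (simp add: map_poly_of_int_mult map_poly_smult F G mult_ac fg[symmetric]
        map_poly_of_int_geom_poly)
  then have FG: "F * G = smult (d * e) (geom_poly p)" by (simp only: map_poly_of_int_inject)
  define u where "u = unit_factor (d * e)"
  have u: "u * u = 1" "u \<noteq> 0" using d e by (simp_all add: u_def sgn_if)
  have pp_geom: "primitive_part (geom_poly p :: int poly) = geom_poly p"
    using content_times_primitive_part[of "geom_poly p :: int poly"] by (simp add: content_geom_poly p0)
  have "primitive_part F * primitive_part G = smult u (geom_poly p)"
    unfolding primitive_part_mult[symmetric] FG primitive_part_smult pp_geom u_def ..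
  then have "primitive_part F * smult u (primitive_part G) = geom_poly p"
    by (simp add: u)
  then have "degree (primitive_part F) = 0 \<or> degree (smult u (primitive_part G)) = 0"
    by (rule geom_poly_prime_factor_const_int[OF p])
  moreover have "degree F = degree f" "degree G = degree g"
    using arg_cong[OF F, of degree] arg_cong[OF G, of degree] d e by (simp_all add: degree_map_poly)
  ultimately show ?thesis using u by auto
qed

definition int_coeffs_poly :: "(nat \<Rightarrow> int) \<Rightarrow> nat \<Rightarrow> 'a::comm_ring_1 poly" where
  "int_coeffs_poly c n = (\<Sum>i<n. monom (of_int (c i)) i)"

lemma coeff_int_coeffs_poly: "coeff (int_coeffs_poly c n) i = (if i < n then of_int (c i) else 0)"
  by (simp add: int_coeffs_poly_def coeff_sum coeff_monom)

lemma poly_int_coeffs_poly: "poly (int_coeffs_poly c n) x = (\<Sum>i<n. of_int (c i) * x ^ i)"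
  by (simp add: int_coeffs_poly_def poly_sum poly_monom)

lemma map_poly_of_rat_int_coeffs_poly:
  "map_poly (of_rat :: rat \<Rightarrow> 'a::field_char_0) (int_coeffs_poly c n) = int_coeffs_poly c n"
  by (rule poly_eqI) (simp add: coeff_map_poly coeff_int_coeffs_poly)

section \<open>Difference counts and quadratic residues\<close>

lemma sum_mod_classes:
  fixes f :: "'b \<Rightarrow> int" and g :: "'b \<Rightarrow> 'c::comm_monoid_add"
  assumes "finite S" and "m > 0"
  shows "(\<Sum>i<m. \<Sum>s | s \<in> S \<and> f s mod int m = int i. g s) = (\<Sum>s\<in>S. g s)"
proof -
  have "(\<Sum>i<m. \<Sum>s | s \<in> S \<and> nat (f s mod int m) = i. g s) = (\<Sum>s\<in>S. g s)"
    using assms by (intro sum.group) (auto simp: nat_less_iff)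
  moreover have "nat (f s mod int m) = i \<longleftrightarrow> f s mod int m = int i" for s i
    using assms by auto
  ultimately show ?thesis by simp
qed

lemma residue_class_subset:
  assumes "B \<subseteq> {0..<int m}"
  shows "{b. b \<in> B \<and> b mod int m = int i} = B \<inter> {int i}"
  using assms by auto

lemma dvd_diff_iff_eq:
  assumes "a \<in> {0..<int m}" and "b \<in> {0..<int m}"
  shows "int m dvd a - b \<longleftrightarrow> a = b"
  using assms by (auto simp flip: mod_eq_dvd_iff)

lemma residue_class_shift_subset:
  assumes "B \<subseteq> {0..<int m}"
  shows "{b. b \<in> B \<and> (b - k) mod int m = 0} = B \<inter> {k mod int m}"
proof -
  have "int m dvd b - k \<longleftrightarrow> b = k mod int m" if "b \<in> B" for b
    using that assms by (auto simp flip: mod_eq_dvd_iff)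
  then show ?thesis by auto
qed

lemma sum_indicator_residues:
  assumes "B \<subseteq> {0..<int m}"
  shows "(\<Sum>i<m. if int i \<in> B then 1 else 0) = card B"
proof (cases "m = 0")
  case False
  have "finite B" using assms finite_subset by blast
  with False have "card B = (\<Sum>i<m. card {b. b \<in> B \<and> b mod int m = int i})"
    using sum_mod_classes[where S = B and f = "\<lambda>b. b" and g = "\<lambda>_. 1::nat"] by simp
  also have "\<dots> = (\<Sum>i<m. if int i \<in> B then 1 else 0)"
    by (intro sum.cong refl) (simp add: residue_class_subset[OF assms])
  finally show ?thesis ..
qed (use assms in auto)

definition diff_count :: "nat \<Rightarrow> int set \<Rightarrow> int \<Rightarrow> nat" where
  "diff_count p A i = card {x \<in> A \<times> A. (fst x - snd x) mod int p = i}"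

lemma diff_count_0:
  assumes "A \<subseteq> {0..<int p}"
  shows "diff_count p A 0 = card A"
proof -
  have "int p dvd a - b \<longleftrightarrow> a = b" if "a \<in> A" "b \<in> A" for a b
    using that assms by (intro dvd_diff_iff_eq) auto
  then have "{x \<in> A \<times> A. (fst x - snd x) mod int p = 0} = (\<lambda>a. (a, a)) ` A" by auto
  then show ?thesis by (simp add: diff_count_def card_image inj_on_def)
qed

lemma sum_diff_count:
  assumes "finite A" and "p > 0"
  shows "(\<Sum>i<p. diff_count p A (int i)) = card A * card A"
  unfolding diff_count_def
  using sum_mod_classes[where S = "A \<times> A" and f = "\<lambda>x. fst x - snd x" and g = "\<lambda>_. 1::nat"] assms
  by (simp add: card_cartesian_product)

lemma distinct_diffs_in_iff:
  assumes A: "A \<subseteq> {0..<int p}"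
  shows "(\<forall>a1\<in>A. \<forall>a2\<in>A. a1 \<noteq> a2 \<longrightarrow> (a1 - a2) mod int p \<in> R) \<longleftrightarrow>
    (\<forall>i\<in>{1..<int p} - R. {x \<in> A \<times> A. (fst x - snd x) mod int p = i} = {})"
proof -
  have nonzero_iff: "(a1 - a2) mod int p \<noteq> 0 \<longleftrightarrow> a1 \<noteq> a2" if "a1 \<in> A" "a2 \<in> A" for a1 a2
  proof -
    have "a1 \<in> {0..<int p}" "a2 \<in> {0..<int p}" using that A by auto
    then have "int p dvd a1 - a2 \<longleftrightarrow> a1 = a2" by (rule dvd_diff_iff_eq)
    then show ?thesis by (simp add: mod_eq_0_iff_dvd)
  qed
  show ?thesis
  proof
    assume in_R: "\<forall>a1\<in>A. \<forall>a2\<in>A. a1 \<noteq> a2 \<longrightarrow> (a1 - a2) mod int p \<in> R"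
    show "\<forall>i\<in>{1..<int p} - R. {x \<in> A \<times> A. (fst x - snd x) mod int p = i} = {}"
    proof (intro ballI equals0I)
      fix i x assume i: "i \<in> {1..<int p} - R" and "x \<in> {x \<in> A \<times> A. (fst x - snd x) mod int p = i}"
      then have x: "fst x \<in> A" "snd x \<in> A" "(fst x - snd x) mod int p = i" by auto
      with i nonzero_iff have "fst x \<noteq> snd x" by auto
      with in_R x have "i \<in> R" by blast
      with i show False by simp
    qed
  next
    assume empty: "\<forall>i\<in>{1..<int p} - R. {x \<in> A \<times> A. (fst x - snd x) mod int p = i} = {}"
    show "\<forall>a1\<in>A. \<forall>a2\<in>A. a1 \<noteq> a2 \<longrightarrow> (a1 - a2) mod int p \<in> R"
    proof (intro ballI impI)
      fix a1 a2 assume a: "a1 \<in> A" "a2 \<in> A" "a1 \<noteq> a2"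
      have "int p > 0" using a A by auto
      moreover have "(a1 - a2) mod int p \<noteq> 0" using nonzero_iff[OF a(1,2)] a(3) by simp
      ultimately have "(a1 - a2) mod int p \<in> {1..<int p}"
        using pos_mod_sign[OF \<open>int p > 0\<close>, of "a1 - a2"] pos_mod_bound[OF \<open>int p > 0\<close>, of "a1 - a2"]
        by simp
      moreover have "(a1, a2) \<in> {x \<in> A \<times> A. (fst x - snd x) mod int p = (a1 - a2) mod int p}"
        using a by simp
      ultimately show "(a1 - a2) mod int p \<in> R" using empty by blast
    qed
  qed
qed

lemma diff_exact_iff_diff_count:
  assumes A: "A \<subseteq> {0..<int p}" and R: "R \<subseteq> {1..<int p}"
  shows "diff_exact p A R \<longleftrightarrow> (\<forall>i\<in>{1..<int p}. diff_count p A i = (if i \<in> R then 1 else 0))"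
proof -
  define P where "P i = {x \<in> A \<times> A. (fst x - snd x) mod int p = i}" for i
  have "finite A" using A by (rule finite_subset) simp
  then have finite_P: "finite (P i)" for i
    unfolding P_def by (auto intro: finite_subset[of _ "A \<times> A"])
  have "(\<exists>!(a1, a2). a1 \<in> A \<and> a2 \<in> A \<and> (a1 - a2) mod int p = s) \<longleftrightarrow> (\<exists>!x. x \<in> P s)" for s
    by (simp add: P_def case_prod_unfold mem_Times_iff)
  also have "(\<exists>!x. x \<in> P s) \<longleftrightarrow> card (P s) = 1" for s
    unfolding One_nat_def card_1_singleton_iff by (auto simp: Ex1_def set_eq_iff)
  finally have unique_iff: "(\<exists>!(a1, a2). a1 \<in> A \<and> a2 \<in> A \<and> (a1 - a2) mod int p = s) \<longleftrightarrow> card (P s) = 1"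
    for s .
  have "diff_exact p A R \<longleftrightarrow> (\<forall>s\<in>R. card (P s) = 1) \<and> (\<forall>i\<in>{1..<int p} - R. P i = {})"
    unfolding diff_exact_def unique_iff distinct_diffs_in_iff[OF A] P_def ..
  also have "\<dots> \<longleftrightarrow> (\<forall>i\<in>{1..<int p}. card (P i) = (if i \<in> R then 1 else 0))"
    using R finite_P by (auto simp: card_eq_0_iff)
  finally show ?thesis by (simp add: diff_count_def P_def)
qed

lemma diff_exact_iff_diff_count_eq:
  assumes A: "A \<subseteq> {0..<int p}" and R: "R \<subseteq> {1..<int p}"
  shows "diff_exact p A R \<longleftrightarrow>
    (\<forall>i<p. diff_count p A (int i) = (if i = 0 then card A else 0) + (if int i \<in> R then 1 else 0))"
  unfolding diff_exact_iff_diff_count[OF A R]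
proof
  assume H: "\<forall>i\<in>{1..<int p}. diff_count p A i = (if i \<in> R then 1 else 0)"
  show "\<forall>i<p. diff_count p A (int i) = (if i = 0 then card A else 0) + (if int i \<in> R then 1 else 0)"
  proof (intro allI impI)
    fix i assume "i < p"
    then show "diff_count p A (int i) = (if i = 0 then card A else 0) + (if int i \<in> R then 1 else 0)"
      using H R diff_count_0[OF A] by (cases "i = 0") auto
  qed
next
  assume H: "\<forall>i<p. diff_count p A (int i) = (if i = 0 then card A else 0) + (if int i \<in> R then 1 else 0)"
  show "\<forall>i\<in>{1..<int p}. diff_count p A i = (if i \<in> R then 1 else 0)"
  proof
    fix i assume "i \<in> {1..<int p}"
    then have "nat i < p" "nat i \<noteq> 0" "int (nat i) = i" by auto
    with H show "diff_count p A i = (if i \<in> R then 1 else 0)" by force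
  qed
qed

lemma card_mult_self_diff_exact:
  assumes "p > 0" and A: "A \<subseteq> {0..<int p}" and R: "R \<subseteq> {1..<int p}" and "diff_exact p A R"
  shows "card A * card A = card A + card R"
proof -
  have "finite A" using A finite_subset by blast
  then have "card A * card A = (\<Sum>i<p. diff_count p A (int i))"
    using \<open>p > 0\<close> by (simp add: sum_diff_count)
  also have "\<dots> = (\<Sum>i<p. (if i = 0 then card A else 0) + (if int i \<in> R then 1 else 0))"
    using \<open>diff_exact p A R\<close> unfolding diff_exact_iff_diff_count_eq[OF A R] by simp
  also have "\<dots> = card A + card R"
    using \<open>p > 0\<close> R sum_indicator_residues[of R p] by (force simp: sum.distrib)
  finally show ?thesis .
qed

lemma quad_res_set_subset: "quad_res_set p \<subseteq> {1..<int p}"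
  by (auto simp: quad_res_set_def)

lemma quad_res_set_2: "quad_res_set 2 = {1}"
proof -
  have "QuadRes 2 1" unfolding QuadRes_def by (rule exI[of _ 1]) simp
  then show ?thesis by (auto simp: quad_res_set_def)
qed

lemma quad_res_set_eq_image:
  assumes p: "prime p" and odd: "odd p"
  shows "quad_res_set p = (\<lambda>x. x\<^sup>2 mod int p) ` {1..(int p - 1) div 2}"
proof
  have half: "2 * ((int p - 1) div 2) = int p - 1" using odd by (auto elim: oddE)
  have "p \<noteq> 2" using odd by auto
  with prime_ge_2_nat[OF p] have p2: "p > 2" by linarith
  show "quad_res_set p \<subseteq> (\<lambda>x. x\<^sup>2 mod int p) ` {1..(int p - 1) div 2}"
  proof
    fix r assume "r \<in> quad_res_set p"
    then have r: "1 \<le> r" "r < int p" and "QuadRes (int p) r" by (auto simp: quad_res_set_def)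
    then obtain y where y: "[y\<^sup>2 = r] (mod int p)" by (auto simp: QuadRes_def)
    define w where "w = y mod int p"
    have w: "0 \<le> w" "w < int p" using p2 by (auto simp: w_def)
    have "[w\<^sup>2 = r] (mod int p)"
      using y by (metis w_def cong_mod_left cong_pow cong_trans cong_refl)
    then have wr: "r = w\<^sup>2 mod int p" using r by (simp add: cong_def)
    then have "w \<noteq> 0" using r by auto
    show "r \<in> (\<lambda>x. x\<^sup>2 mod int p) ` {1..(int p - 1) div 2}"
    proof (cases "w \<le> (int p - 1) div 2")
      case True
      then show ?thesis using wr w \<open>w \<noteq> 0\<close> by force
    next
      case False
      have "(int p - w)\<^sup>2 mod int p = w\<^sup>2 mod int p"
        by (simp add: power2_eq_square algebra_simps mod_eq_dvd_iff)
      moreover have "int p - w \<in> {1..(int p - 1) div 2}" using False w half by auto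
      ultimately show ?thesis using wr by (metis image_eqI)
    qed
  qed
next
  show "(\<lambda>x. x\<^sup>2 mod int p) ` {1..(int p - 1) div 2} \<subseteq> quad_res_set p"
  proof
    fix r assume "r \<in> (\<lambda>x. x\<^sup>2 mod int p) ` {1..(int p - 1) div 2}"
    then obtain x where x: "1 \<le> x" "x \<le> (int p - 1) div 2" and rx: "r = x\<^sup>2 mod int p" by auto
    have "\<not> int p dvd x" using x by (auto dest: zdvd_imp_le)
    then have "\<not> int p dvd x\<^sup>2" using p by (simp add: prime_dvd_power_iff)
    then have "r \<noteq> 0" using rx by (simp add: dvd_eq_mod_eq_0)
    moreover have "0 \<le> r" "r < int p" using rx p prime_gt_0_nat by auto
    moreover have "QuadRes (int p) r" unfolding QuadRes_def rx by (auto simp: cong_def)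
    ultimately show "r \<in> quad_res_set p" by (auto simp: quad_res_set_def)
  qed
qed

lemma inj_on_square_mod:
  assumes p: "prime p" and odd: "odd p"
  shows "inj_on (\<lambda>x. x\<^sup>2 mod int p) {1..(int p - 1) div 2}"
proof (rule inj_onI)
  have half: "2 * ((int p - 1) div 2) = int p - 1" using odd by (auto elim: oddE)
  fix x y assume x: "x \<in> {1..(int p - 1) div 2}" and y: "y \<in> {1..(int p - 1) div 2}"
    and eq: "x\<^sup>2 mod int p = y\<^sup>2 mod int p"
  then have "int p dvd (x - y) * (x + y)"
    by (simp add: mod_eq_dvd_iff power2_eq_square algebra_simps)
  moreover have "\<not> int p dvd x + y" using x y half by (auto dest: zdvd_imp_le)
  ultimately have "int p dvd x - y" using p by (simp add: prime_dvd_mult_iff)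
  moreover have "\<bar>x - y\<bar> < int p" using x y half by auto
  ultimately show "x = y" using dvd_imp_le_int[of "x - y" "int p"] by fastforce
qed

lemma card_quad_res_set:
  assumes "prime p" and "odd p"
  shows "2 * card (quad_res_set p) = p - 1"
proof -
  have half: "2 * ((int p - 1) div 2) = int p - 1" using \<open>odd p\<close> by (auto elim: oddE)
  have "card (quad_res_set p) = nat ((int p - 1) div 2)"
    using quad_res_set_eq_image[OF assms] inj_on_square_mod[OF assms] by (simp add: card_image)
  then show ?thesis using half by linarith
qed

lemma prime_eq_of_diff_exact:
  assumes p: "prime p" and A: "A \<subseteq> {0..<int p}" and de: "diff_exact p A (quad_res_set p)"
  shows "int p = 2 * int (card A) * (int (card A) - 1) + 1"
proof -
  let ?n = "card A" and ?r = "card (quad_res_set p)"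
  have sq: "?n * ?n = ?n + ?r"
    using card_mult_self_diff_exact[OF prime_gt_0_nat[OF p] A quad_res_set_subset de] .
  have "p \<noteq> 2"
  proof
    assume "p = 2"
    with sq have sq2: "?n * ?n = ?n + 1" by (simp add: quad_res_set_2)
    show False
    proof (cases "?n \<le> 1")
      case True
      then show False using sq2 by (auto simp: le_Suc_eq)
    next
      case False
      then have "2 * ?n \<le> ?n * ?n" by (intro mult_right_mono) auto
      with sq2 False show False by linarith
    qed
  qed
  with prime_ge_2_nat[OF p] have "p > 2" by linarith
  with p have "odd p" by (rule prime_odd_nat)
  with p have "2 * ?r = p - 1" by (rule card_quad_res_set)
  then have "2 * int ?r = int p - 1" using prime_gt_0_nat[OF p] by linarith
  moreover have "int ?n * int ?n = int ?n + int ?r" using sq by (metis of_nat_add of_nat_mult)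
  moreover have "2 * int ?n * (int ?n - 1) + 1 = 2 * (int ?n * int ?n) - 2 * int ?n + 1"
    by (simp add: algebra_simps)
  ultimately show ?thesis by linarith
qed

section \<open>Sums of roots of unity\<close>

lemma of_int_in_pair_iff: "(of_int a :: 'a::ring_char_0) \<in> {of_int b, of_int c} \<longleftrightarrow> a \<in> {b, c}"
  by auto

locale prime_root_of_unity =
  fixes p :: nat and z :: complex
  assumes prime: "prime p" and z_pow_p: "z ^ p = 1" and z_neq_1: "z \<noteq> 1"
begin

lemma p_ge_2: "p \<ge> 2"
  using prime prime_ge_2_nat by blast

lemma p_gt_0: "p > 0"
  using p_ge_2 by simp

lemma z_neq_0: "z \<noteq> 0"
  using z_pow_p p_gt_0 by (cases p) auto

lemma z_pow_eq_1_iff: "z ^ j = 1 \<longleftrightarrow> p dvd j"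
proof
  assume zj: "z ^ j = 1"
  show "p dvd j"
  proof (rule ccontr)
    assume "\<not> p dvd j"
    then have "j \<noteq> 0" by (rule contrapos_nn) simp
    have "coprime j p" using prime_imp_coprime[OF prime \<open>\<not> p dvd j\<close>] by (simp add: coprime_commute)
    then have "gcd j p = 1" by simp
    with \<open>j \<noteq> 0\<close> obtain x y where "j * x = p * y + 1" using bezout_nat[of j p] by auto
    then have "z ^ (j * x) = (z ^ p) ^ y * z" by (simp add: power_add power_mult)
    with zj z_pow_p z_neq_1 show False by (simp add: power_mult)
  qed
qed (auto simp: power_mult z_pow_p)

lemma sum_powers_z_pow: "(\<Sum>i<p. (z ^ j) ^ i) = (if p dvd j then of_nat p else 0)"
proof (cases "p dvd j")
  case False
  have "(z ^ j) ^ p = (z ^ p) ^ j" by (simp only: mult.commute flip: power_mult)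
  then have "(z ^ j) ^ p = 1" by (simp add: z_pow_p)
  then have "(z ^ j - 1) * (\<Sum>i<p. (z ^ j) ^ i) = 0" using power_diff_1_eq[of "z ^ j" p] by simp
  with False show ?thesis by (simp add: z_pow_eq_1_iff)
next
  case True
  then have "z ^ j = 1" by (simp add: z_pow_eq_1_iff)
  with True show ?thesis by simp
qed

text \<open>\<open>gcd C \<Phi>\<^sub>p\<close> also vanishes at \<open>z\<close>, so by irreducibility it is \<open>\<Phi>\<^sub>p\<close> up to a unit.\<close>

lemma geom_poly_dvd_of_root:
  fixes C :: "rat poly"
  assumes C: "poly (map_poly of_rat C) z = 0"
  shows "geom_poly p dvd C"
proof -
  define g where "g = gcd C (geom_poly p)"
  have Phi_z: "poly (geom_poly p :: complex poly) z = 0"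
    using sum_powers_z_pow[of 1] p_ge_2 by (simp add: poly_geom_poly)
  obtain u v where "u * C + v * geom_poly p = g"
    using bezout_coefficients_fst_snd unfolding g_def by blast
  then have "map_poly of_rat g =
      (map_poly of_rat u * map_poly of_rat C + map_poly of_rat v * geom_poly p :: complex poly)"
    by (auto simp: map_poly_of_rat_add map_poly_of_rat_mult map_poly_of_rat_geom_poly)
  then have g_z: "poly (map_poly of_rat g) z = 0" using C Phi_z by simp
  have "g dvd geom_poly p" unfolding g_def by (rule gcd_dvd2)
  then obtain h where h: "geom_poly p = g * h" by (rule dvdE)
  have "geom_poly p \<noteq> (0 :: rat poly)" using p_gt_0 by (rule geom_poly_nonzero)
  with h have "g \<noteq> 0" "h \<noteq> 0" by auto
  from geom_poly_prime_factor_const_rat[OF prime h[symmetric]]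
  show ?thesis
  proof
    assume "degree g = 0"
    then obtain c where c: "g = [:c:]" by (rule degree_eq_zeroE)
    with g_z have "c = 0" by (simp add: map_poly_pCons)
    with c \<open>g \<noteq> 0\<close> show ?thesis by simp
  next
    assume "degree h = 0"
    then obtain c where c: "h = [:c:]" by (rule degree_eq_zeroE)
    with h have "geom_poly p = smult c g" by simp
    moreover have "c \<noteq> 0" using c \<open>h \<noteq> 0\<close> by simp
    ultimately have "geom_poly p dvd g" by (simp add: smult_dvd_iff)
    moreover have "g dvd C" unfolding g_def by (rule gcd_dvd1)
    ultimately show ?thesis by (rule dvd_trans)
  qed
qed

lemma rat_poly_root_z_pow:
  fixes C :: "rat poly"
  assumes C: "poly (map_poly of_rat C) z = 0" and j: "\<not> p dvd j"
  shows "poly (map_poly of_rat C) (z ^ j) = 0"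
proof -
  obtain w where "C = geom_poly p * w" using geom_poly_dvd_of_root[OF C] by (rule dvdE)
  then have "poly (map_poly of_rat C) (z ^ j) = poly (geom_poly p) (z ^ j) * poly (map_poly of_rat w) (z ^ j)"
    by (simp add: map_poly_of_rat_mult map_poly_of_rat_geom_poly)
  also have "poly (geom_poly p) (z ^ j) = 0"
    using sum_powers_z_pow[of j] j by (simp add: poly_geom_poly)
  finally show ?thesis by simp
qed

lemma int_coeffs_eq_of_sum_eq:
  fixes c d :: "nat \<Rightarrow> int"
  assumes eq: "(\<Sum>i<p. of_int (c i) * z ^ i) = (\<Sum>i<p. of_int (d i) * z ^ i)"
    and c0: "c 0 = d 0" and i: "i < p"
  shows "c i = d i"
proof -
  define C :: "rat poly" where "C = int_coeffs_poly (\<lambda>i. c i - d i) p"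
  have "poly (map_poly of_rat C) z = 0"
    using eq by (simp add: C_def map_poly_of_rat_int_coeffs_poly poly_int_coeffs_poly
        algebra_simps sum_subtractf)
  then obtain w where w: "C = geom_poly p * w" using geom_poly_dvd_of_root by (blast elim: dvdE)
  have "degree C \<le> p - 1"
    by (rule degree_le) (auto simp: C_def coeff_int_coeffs_poly)
  then have "degree w = 0"
    using w p_gt_0 by (cases "w = 0") (auto simp: degree_mult_eq degree_geom_poly geom_poly_nonzero)
  then obtain a where "w = [:a:]" by (rule degree_eq_zeroE)
  then have "coeff C i = coeff C 0" using w i p_gt_0 by (simp add: coeff_geom_poly)
  with c0 i p_gt_0 show ?thesis by (simp add: C_def coeff_int_coeffs_poly)
qed

lemma sum_int_coeffs_eq_iff:
  fixes c d :: "nat \<Rightarrow> int"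
  assumes "c 0 = d 0"
  shows "(\<Sum>i<p. of_int (c i) * z ^ i) = (\<Sum>i<p. of_int (d i) * z ^ i) \<longleftrightarrow> (\<forall>i<p. c i = d i)"
proof
  assume "(\<Sum>i<p. of_int (c i) * z ^ i) = (\<Sum>i<p. of_int (d i) * z ^ i)"
  with assms show "\<forall>i<p. c i = d i" using int_coeffs_eq_of_sum_eq by blast
qed simp

lemma sum_nontrivial_powers_z_pow:
  assumes "i < p"
  shows "(\<Sum>j\<in>{1..<p}. (z ^ i) ^ j) = (if i = 0 then of_nat p else 0) - 1"
proof -
  have "{..<p} = insert 0 {1..<p}" using p_gt_0 by auto
  then have "(\<Sum>j<p. (z ^ i) ^ j) = 1 + (\<Sum>j\<in>{1..<p}. (z ^ i) ^ j)" by simp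
  moreover have "(\<Sum>j<p. (z ^ i) ^ j) = (if i = 0 then of_nat p else 0)"
    using sum_powers_z_pow[of i] assms by (auto dest: dvd_imp_le)
  ultimately show ?thesis by (simp add: algebra_simps)
qed

text \<open>The value singled out by \<open>cyc_trace\<close> does not depend on the chosen rational polynomial:
  two polynomials that agree at \<open>z\<close> agree at every conjugate \<open>z\<^sup>j\<close>.\<close>

lemma cyc_trace_int_coeffs:
  "cyc_trace p z (\<Sum>i<p. of_int (c i) * z ^ i) = of_int (int p * c 0 - (\<Sum>i<p. c i))"
proof -
  let ?q = "int_coeffs_poly c p :: rat poly"
  have q: "poly (map_poly of_rat ?q) x = (\<Sum>i<p. of_int (c i) * x ^ i)" for x :: complex
    by (simp add: map_poly_of_rat_int_coeffs_poly poly_int_coeffs_poly)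
  have "(\<Sum>j\<in>{1..<p}. poly (map_poly of_rat ?q) (z ^ j))
        = (\<Sum>i<p. of_int (c i) * (\<Sum>j\<in>{1..<p}. (z ^ i) ^ j))"
    unfolding q by (subst sum.swap) (simp add: sum_distrib_left mult.commute flip: power_mult)
  also have "\<dots> = (\<Sum>i<p. (if i = 0 then of_int (c i) * of_nat p else 0) - of_int (c i))"
    by (intro sum.cong refl, subst sum_nontrivial_powers_z_pow) (simp_all add: algebra_simps)
  also have "\<dots> = of_int (int p * c 0 - (\<Sum>i<p. c i))"
    using p_gt_0 by (simp add: sum_subtractf sum.delta of_int_sum)
  finally have trace_q: "(\<Sum>j\<in>{1..<p}. poly (map_poly of_rat ?q) (z ^ j)) = \<dots>" .
  show ?thesis unfolding cyc_trace_def
  proof (rule the_equality[rotated])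
    fix t assume "\<exists>q. poly (map_poly of_rat q) z = (\<Sum>i<p. of_int (c i) * z ^ i) \<and>
        t = (\<Sum>j\<in>{1..<p}. poly (map_poly of_rat q) (z ^ j))"
    then obtain q where qz: "poly (map_poly of_rat q) z = (\<Sum>i<p. of_int (c i) * z ^ i)"
      and t: "t = (\<Sum>j\<in>{1..<p}. poly (map_poly of_rat q) (z ^ j))" by blast
    have "poly (map_poly of_rat (q - ?q)) z = 0" using qz q by (simp add: map_poly_of_rat_diff)
    then have "poly (map_poly of_rat (q - ?q)) (z ^ j) = 0" if "j \<in> {1..<p}" for j
      using that by (intro rat_poly_root_z_pow) (auto dest: dvd_imp_le)
    then have "t = (\<Sum>j\<in>{1..<p}. poly (map_poly of_rat ?q) (z ^ j))"
      unfolding t by (intro sum.cong) (simp_all add: map_poly_of_rat_diff)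
    with trace_q show "t = of_int (int p * c 0 - (\<Sum>i<p. c i))" by simp
  next
    show "\<exists>q. poly (map_poly of_rat q) z = (\<Sum>i<p. of_int (c i) * z ^ i) \<and>
        of_int (int p * c 0 - (\<Sum>i<p. c i)) = (\<Sum>j\<in>{1..<p}. poly (map_poly of_rat q) (z ^ j))"
      using q trace_q by (intro exI[of _ ?q]) simp
  qed
qed

lemma z_powi_add: "z powi (a + b) = z powi a * z powi b"
  using z_neq_0 by (rule power_int_add[OF disjI1])

lemma z_powi_diff: "z powi (a - b) = z powi a * z powi (- b)"
  using z_powi_add[of a "- b"] by simp

lemma z_powi_mod: "z powi k = z ^ nat (k mod int p)"
proof -
  have "z powi k = z powi (k mod int p + int p * (k div int p))" by simp
  also have "\<dots> = z powi (k mod int p) * (z ^ p) powi (k div int p)"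
    unfolding z_powi_add power_int_mult by simp
  also have "\<dots> = z powi (k mod int p)" by (simp add: z_pow_p)
  also have "k mod int p = int (nat (k mod int p))" using p_gt_0 by simp
  finally show ?thesis by (simp only: power_int_of_nat)
qed

lemma sum_powi_reduce:
  fixes w f :: "'b \<Rightarrow> int"
  assumes "finite S"
  shows "(\<Sum>s\<in>S. of_int (w s) * z powi f s) =
    (\<Sum>i<p. of_int (\<Sum>s | s \<in> S \<and> f s mod int p = int i. w s) * z ^ i)"
proof -
  have "(\<Sum>s\<in>S. of_int (w s) * z powi f s) =
      (\<Sum>i<p. \<Sum>s | s \<in> S \<and> f s mod int p = int i. of_int (w s) * z powi f s)"
    by (rule sum_mod_classes[OF assms p_gt_0, symmetric])
  also have "\<dots> = (\<Sum>i<p. of_int (\<Sum>s | s \<in> S \<and> f s mod int p = int i. w s) * z ^ i)"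
  proof (intro sum.cong refl)
    fix i
    have "(\<Sum>s | s \<in> S \<and> f s mod int p = int i. of_int (w s) * z powi f s) =
        (\<Sum>s | s \<in> S \<and> f s mod int p = int i. of_int (w s) * z ^ i)"
      by (intro sum.cong refl) (simp add: z_powi_mod)
    then show "(\<Sum>s | s \<in> S \<and> f s mod int p = int i. of_int (w s) * z powi f s) =
        of_int (\<Sum>s | s \<in> S \<and> f s mod int p = int i. w s) * z ^ i"
      by (simp add: of_int_sum sum_distrib_right)
  qed
  finally show ?thesis .
qed

lemma cyc_trace_sum_powi:
  fixes w f :: "'b \<Rightarrow> int"
  assumes "finite S"
  shows "cyc_trace p z (\<Sum>s\<in>S. of_int (w s) * z powi f s) =
    of_int (int p * (\<Sum>s | s \<in> S \<and> f s mod int p = 0. w s) - (\<Sum>s\<in>S. w s))"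
  unfolding sum_powi_reduce[OF assms] cyc_trace_int_coeffs sum_mod_classes[OF assms p_gt_0] by simp

lemma cmod_sq_sum_powi:
  assumes "finite A"
  shows "complex_of_real ((cmod (\<Sum>a\<in>A. z powi a))\<^sup>2) = (\<Sum>x\<in>A \<times> A. z powi (fst x - snd x))"
proof -
  have "cmod z ^ p = 1" using z_pow_p by (simp flip: norm_power)
  then have "cmod z = 1" using power_eq_imp_eq_base[of "cmod z" p 1] p_gt_0 by simp
  then have cnj_z: "cnj z = inverse z"
    using complex_norm_square[of z] z_neq_0 by (simp add: inverse_unique)
  have "complex_of_real ((cmod (\<Sum>a\<in>A. z powi a))\<^sup>2) = (\<Sum>a\<in>A. z powi a) * cnj (\<Sum>a\<in>A. z powi a)"
    by (rule complex_norm_square)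
  also have "\<dots> = (\<Sum>a\<in>A. \<Sum>b\<in>A. z powi a * cnj (z powi b))"
    by (simp only: cnj_sum sum_distrib_right sum_distrib_left) (rule sum.swap)
  also have "\<dots> = (\<Sum>a\<in>A. \<Sum>b\<in>A. z powi (a - b))"
    by (simp add: z_powi_diff cnj_z power_int_minus power_int_inverse)
  also have "\<dots> = (\<Sum>x\<in>A \<times> A. z powi (fst x - snd x))"
    by (simp add: sum.cartesian_product case_prod_unfold)
  finally show ?thesis .
qed

lemma subset_sum_eq_int_coeffs:
  assumes A: "A \<subseteq> {0..<int p}"
  shows "(\<Sum>a\<in>A. z powi a) = (\<Sum>i<p. of_int (if int i \<in> A then 1 else 0) * z ^ i)"
proof -
  have "finite A" using A finite_subset by blast
  then have "(\<Sum>a\<in>A. of_int 1 * z powi a) =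
      (\<Sum>i<p. of_int (\<Sum>a | a \<in> A \<and> a mod int p = int i. 1) * z ^ i)"
    by (rule sum_powi_reduce)
  also have "\<dots> = (\<Sum>i<p. of_int (if int i \<in> A then 1 else 0) * z ^ i)"
    by (intro sum.cong refl) (simp add: residue_class_subset[OF A])
  finally show ?thesis by simp
qed

lemma subset_sum_in_cyc_int:
  assumes "A \<subseteq> {0..<int p}"
  shows "(\<Sum>a\<in>A. z powi a) \<in> cyc_int p z"
  unfolding cyc_int_def subset_sum_eq_int_coeffs[OF assms]
  by (rule CollectI exI[of _ "\<lambda>j. if int j \<in> A then 1 else 0"] refl)+

lemma cmod_sq_subset_sum:
  assumes "finite A"
  shows "complex_of_real ((cmod (\<Sum>a\<in>A. z powi a))\<^sup>2) =
    (\<Sum>i<p. of_int (int (diff_count p A (int i))) * z ^ i)"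
proof -
  have "complex_of_real ((cmod (\<Sum>a\<in>A. z powi a))\<^sup>2) = (\<Sum>x\<in>A \<times> A. of_int 1 * z powi (fst x - snd x))"
    using cmod_sq_sum_powi[OF assms] by simp
  also have "\<dots> = (\<Sum>i<p. of_int (\<Sum>x | x \<in> A \<times> A \<and> (fst x - snd x) mod int p = int i. 1) * z ^ i)"
    using assms by (intro sum_powi_reduce) simp
  finally show ?thesis by (simp add: diff_count_def)
qed

lemma cmod_sq_subset_sum_iff_diff_exact:
  assumes A: "A \<subseteq> {0..<int p}" and R: "R \<subseteq> {1..<int p}"
  shows "complex_of_real ((cmod (\<Sum>a\<in>A. z powi a))\<^sup>2) = of_nat (card A) + (\<Sum>x\<in>R. z powi x)
    \<longleftrightarrow> diff_exact p A R"
proof -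
  define e where "e i = (if i = 0 then card A else 0) + (if int i \<in> R then 1 else 0)" for i
  have "finite A" using A finite_subset by blast
  have "R \<subseteq> {0..<int p}" using R by auto
  then have "(\<Sum>i<p. of_int (int (e i)) * z ^ i) =
      (\<Sum>i<p. if i = 0 then of_nat (card A) else 0) + (\<Sum>x\<in>R. z powi x)"
    unfolding subset_sum_eq_int_coeffs[OF \<open>R \<subseteq> {0..<int p}\<close>] sum.distrib[symmetric]
    by (intro sum.cong refl) (simp add: e_def distrib_right)
  then have "of_nat (card A) + (\<Sum>x\<in>R. z powi x) = (\<Sum>i<p. of_int (int (e i)) * z ^ i)"
    using p_gt_0 by simp
  moreover have "int (diff_count p A (int 0)) = int (e 0)"
    using diff_count_0[OF A] R by (auto simp: e_def)
  ultimately have "complex_of_real ((cmod (\<Sum>a\<in>A. z powi a))\<^sup>2) = of_nat (card A) + (\<Sum>x\<in>R. z powi x)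
      \<longleftrightarrow> (\<forall>i<p. int (diff_count p A (int i)) = int (e i))"
    by (simp only: cmod_sq_subset_sum[OF \<open>finite A\<close>] sum_int_coeffs_eq_iff)
  also have "\<dots> \<longleftrightarrow> diff_exact p A R"
    by (simp only: of_nat_eq_iff diff_exact_iff_diff_count_eq[OF A R] e_def)
  finally show ?thesis .
qed

lemma cyc_trace_subset_sum_shift:
  assumes A: "A \<subseteq> {0..<int p}"
  shows "cyc_trace p z ((\<Sum>a\<in>A. z powi a) * z powi (- k)) =
    of_int (int p * (if k mod int p \<in> A then 1 else 0) - int (card A))"
proof -
  have "finite A" using A finite_subset by blast
  have "(\<Sum>a\<in>A. z powi a) * z powi (- k) = (\<Sum>a\<in>A. of_int 1 * z powi (a - k))"
    by (simp add: sum_distrib_right z_powi_diff)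
  then have "cyc_trace p z ((\<Sum>a\<in>A. z powi a) * z powi (- k)) =
      of_int (int p * (\<Sum>a | a \<in> A \<and> (a - k) mod int p = 0. 1) - (\<Sum>a\<in>A. 1))"
    by (simp only: cyc_trace_sum_powi[OF \<open>finite A\<close>])
  also have "(\<Sum>a | a \<in> A \<and> (a - k) mod int p = 0. 1) = (if k mod int p \<in> A then 1 else (0::int))"
    by (simp add: residue_class_shift_subset[OF A] Int_insert_right)
  finally show ?thesis by simp
qed

lemma cyc_trace_int_coeffs_shift:
  assumes k: "k < p"
  shows "cyc_trace p z ((\<Sum>j<p. of_int (c j) * z ^ j) * z powi (- int k)) =
    of_int (int p * c k - (\<Sum>j<p. c j))"
proof -
  have "(\<Sum>j<p. of_int (c j) * z ^ j) * z powi (- int k) = (\<Sum>j<p. of_int (c j) * z powi (int j - int k))"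
    by (simp add: sum_distrib_right z_powi_diff mult.assoc)
  moreover have "{j. j \<in> {..<p} \<and> (int j - int k) mod int p = 0} = {k}"
    using k dvd_diff_iff_eq[of _ p "int k"] by (auto simp: mod_eq_0_iff_dvd)
  ultimately show ?thesis by (simp add: cyc_trace_sum_powi)
qed

lemma subset_sum_of_trace_condition:
  assumes \<alpha>: "\<alpha> \<in> cyc_int p z"
    and tr: "\<forall>k::int. cyc_trace p z (\<alpha> * z powi (- k)) \<in> {of_int (- n), of_int (int p - n)}"
  shows "\<exists>A \<subseteq> {0..<int p}. \<alpha> = (\<Sum>a\<in>A. z powi a)"
proof -
  obtain c where c: "\<alpha> = (\<Sum>j<p. of_int (c j) * z ^ j)" using \<alpha> by (auto simp: cyc_int_def)
  define S where "S = (\<Sum>j<p. c j)"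
  have tk: "int p * c k - S \<in> {- n, int p - n}" if "k < p" for k
    using tr[rule_format, of "int k"] cyc_trace_int_coeffs_shift[OF that, of c]
    by (simp only: c S_def of_int_in_pair_iff)
  define m where "m = (S - n) div int p"
  have "S - n = int p * c 0 \<or> S - n = int p * (c 0 - 1)"
    using tk[OF p_gt_0] by (auto simp: algebra_simps)
  then have Sm: "S - n = int p * m" unfolding m_def by auto
  have cm: "c j = m \<or> c j = m + 1" if "j < p" for j
  proof -
    have "int p * c j = int p * m \<or> int p * c j = int p * (m + 1)"
      using tk[OF that] Sm by (auto simp: algebra_simps)
    then show ?thesis using p_gt_0 by auto
  qed
  define A where "A = int ` {j. j < p \<and> c j = m + 1}"
  have A: "A \<subseteq> {0..<int p}" by (auto simp: A_def)
  have "\<alpha> = (\<Sum>j<p. of_int (if int j \<in> A then 1 else 0) * z ^ j + of_int m * z ^ j)"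
    unfolding c using cm by (intro sum.cong refl) (auto simp: A_def algebra_simps)
  also have "\<dots> = (\<Sum>j<p. of_int (if int j \<in> A then 1 else 0) * z ^ j) + of_int m * (\<Sum>j<p. z ^ j)"
    by (simp add: sum.distrib sum_distrib_left)
  also have "(\<Sum>j<p. z ^ j) = 0" using sum_powers_z_pow[of 1] p_ge_2 by simp
  finally have "\<alpha> = (\<Sum>a\<in>A. z powi a)" by (simp add: subset_sum_eq_int_coeffs[OF A])
  with A show ?thesis by blast
qed

text \<open>The equation \<open>p = 2n(n - 1) + 1\<close> excludes \<open>n = 0\<close> and \<open>n = p\<close>, the values forced by
  the empty and the full set.\<close>

lemma card_eq_of_trace_condition:
  assumes A: "A \<subseteq> {0..<int p}" and pn: "int p = 2 * n * (n - 1) + 1"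
    and tr: "\<forall>k::int. cyc_trace p z ((\<Sum>a\<in>A. z powi a) * z powi (- k)) \<in> {of_int (- n), of_int (int p - n)}"
  shows "int (card A) = n"
proof -
  have val: "int p * (if k \<in> A then 1 else 0) - int (card A) \<in> {- n, int p - n}" if "k \<in> {0..<int p}" for k
  proof -
    have "k mod int p = k" using that by simp
    with tr[rule_format, of k] show ?thesis
      unfolding cyc_trace_subset_sum_shift[OF A] of_int_in_pair_iff by simp
  qed
  have "n \<noteq> 0" using pn p_ge_2 by auto
  have "n \<noteq> int p"
  proof
    assume "n = int p"
    then have "int p = 2 * int p * (int p - 1) + 1" using pn by simp
    moreover have "2 * int p * 1 \<le> 2 * int p * (int p - 1)" using p_ge_2 by (intro mult_left_mono) auto
    ultimately show False by linarith
  qed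
  have "0 \<in> {0..<int p}" using p_gt_0 by simp
  consider "A = {}" | "A = {0..<int p}" | k0 k1 where "k0 \<in> A" "k1 \<in> {0..<int p} - A"
    using A by blast
  then show ?thesis
  proof cases
    case 1
    then show ?thesis using val[OF \<open>0 \<in> {0..<int p}\<close>] \<open>n \<noteq> 0\<close> \<open>n \<noteq> int p\<close> p_gt_0 by auto
  next
    case 2
    then show ?thesis using val[OF \<open>0 \<in> {0..<int p}\<close>] \<open>n \<noteq> 0\<close> \<open>n \<noteq> int p\<close> p_gt_0 by auto
  next
    case (3 k0 k1)
    then show ?thesis using val[of k0] val[of k1] A p_gt_0 by auto
  qed
qed

end

theorem propositionA1:
  fixes p :: nat and \<zeta> :: complex
  assumes "prime p"
    and "\<zeta> ^ p = 1" and "\<zeta> \<noteq> 1"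
  shows "(\<exists>A \<subseteq> Fp p. diff_exact p A (quad_res_set p)) \<longleftrightarrow>
    (\<exists>n :: int. int p = 2 * n * (n - 1) + 1 \<and>
       (\<exists>\<alpha> \<in> cyc_int p \<zeta>.
          complex_of_real ((cmod \<alpha>)\<^sup>2) = of_int n + gauss_period p \<zeta> \<and>
          (\<forall>k :: int. cyc_trace p \<zeta> (\<alpha> * \<zeta> powi (- k)) \<in> {of_int (- n), of_int (int p - n)})))"
    (is "?L \<longleftrightarrow> ?R")
proof
  interpret prime_root_of_unity p \<zeta> using assms by unfold_locales
  note norm_iff = cmod_sq_subset_sum_iff_diff_exact[OF _ quad_res_set_subset, folded gauss_period_def]
  show ?R if ?L
  proof -
    from that obtain A where A: "A \<subseteq> {0..<int p}" and de: "diff_exact p A (quad_res_set p)"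
      by (auto simp: Fp_def)
    show ?R
      using prime_eq_of_diff_exact[OF \<open>prime p\<close> A de] subset_sum_in_cyc_int[OF A]
        norm_iff[OF A] de cyc_trace_subset_sum_shift[OF A]
      by (intro exI[of _ "int (card A)"] conjI bexI[of _ "\<Sum>a\<in>A. \<zeta> powi a"]) auto
  qed
  show ?L if ?R
  proof -
    from that obtain n \<alpha> where pn: "int p = 2 * n * (n - 1) + 1" and \<alpha>: "\<alpha> \<in> cyc_int p \<zeta>"
      and norm: "complex_of_real ((cmod \<alpha>)\<^sup>2) = of_int n + gauss_period p \<zeta>"
      and tr: "\<forall>k :: int. cyc_trace p \<zeta> (\<alpha> * \<zeta> powi (- k)) \<in> {of_int (- n), of_int (int p - n)}"
      by blast
    obtain A where A: "A \<subseteq> {0..<int p}" and \<alpha>A: "\<alpha> = (\<Sum>a\<in>A. \<zeta> powi a)"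
      using subset_sum_of_trace_condition[OF \<alpha> tr] by blast
    have "int (card A) = n" using card_eq_of_trace_condition[OF A pn] tr \<alpha>A by simp
    then have "(of_int n :: complex) = of_nat (card A)" by (metis of_int_of_nat_eq)
    with norm \<alpha>A have "complex_of_real ((cmod (\<Sum>a\<in>A. \<zeta> powi a))\<^sup>2) = of_nat (card A) + gauss_period p \<zeta>"
      by simp
    then have "diff_exact p A (quad_res_set p)" using norm_iff[OF A] by blast
    with A show ?L by (auto simp: Fp_def)
  qed
qed

end
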